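(* Let $n\geq 2$ and $k\in\{0,\ldots,n-1\}$ be integers, and define $$\varphi_{n,k}(x)=\sum_{i=0}^{n-1}\frac{1}{1-\frac{i}{n-1}x}-\sum_{i=0}^{n-k-1}\frac{1}{1-x-\frac{i}{n-1}x},\qquad x\in\left[0,\frac{n-1}{2n-k-2}\right).$$ Then there exists $x_{n,k}\in\left[\frac{k-1}{n-1},\frac{k}{n-1}\right]$ such that $\varphi_{n,k}$ is positive on $[0,x_{n,k})$ and negative on $\left(x_{n,k},\frac{n-1}{2n-k-2}\right)$. *)

theory Defs
  imports Complex_Main
begin

definition phi :: "nat \<Rightarrow> nat \<Rightarrow> real \<Rightarrow> real" where
  "phi n k x =
     (\<Sum>i=0..n-1. 1 / (1 - (real i / (real n - 1)) * x))
   - (\<Sum>i=0..n-k-1. 1 / (1 - x - (real i / (real n - 1)) * x))"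

end

(*
  Write m = n - 1. Multiplying by 1 - x makes every summand of phi monotone in x
  (the first sum decreases, the subtracted one increases), so (1 - x) phi is strictly
  decreasing and phi changes sign at most once. At a grid point x = c/m, with
  r = m (m - c) / c, phi is a positive multiple of
  sum_{a=0..m} 1/(r + a) - sum_{b=0..m-k} 1/(r - b);
  comparing both sums with integrals of 1/t shows this is <= 0 at c = k and >= 0 at
  c = k - 1, and the intermediate value theorem locates the zero between them.
*)
theory Submission
  imports Defs
begin

definition psi :: "nat \<Rightarrow> nat \<Rightarrow> real \<Rightarrow> real" where
  "psi m k x = (\<Sum>i=0..m. 1 / (1 - real i / real m * x))
             - (\<Sum>i=0..m-k. 1 / (1 - x - real i / real m * x))"

lemma phi_Suc_eq_psi: "phi (Suc m) k x = psi m k x"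
  unfolding phi_def psi_def by simp

definition psi_right_end :: "nat \<Rightarrow> nat \<Rightarrow> real" where
  "psi_right_end m k = real m / (2 * real m - real k)"

lemma inverse_add_one_le_ln_diff:
  fixes t :: real
  assumes "0 < t"
  shows "1 / (t + 1) \<le> ln (t + 1) - ln t"
proof -
  have "ln (t / (t + 1)) \<le> t / (t + 1) - 1"
    using assms by (intro ln_le_minus_one) auto
  then show ?thesis
    using assms by (simp add: ln_div field_simps)
qed

lemma ln_diff_le_inverse:
  fixes t :: real
  assumes "0 < t"
  shows "ln (t + 1) - ln t \<le> 1 / t"
proof -
  have "ln ((t + 1) / t) \<le> (t + 1) / t - 1"
    using assms by (intro ln_le_minus_one) auto
  then show ?thesis
    using assms by (simp add: ln_div field_simps)
qed

lemma sum_le_telescope: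
  fixes f g :: "nat \<Rightarrow> 'a :: ordered_ab_group_add"
  assumes "\<And>a. a < N \<Longrightarrow> f (Suc a) \<le> g (Suc a) - g a"
  shows "(\<Sum>a=0..N. f a) \<le> f 0 + g N - g 0"
  using assms
proof (induction N)
  case (Suc N)
  have "(\<Sum>a=0..Suc N. f a) = (\<Sum>a=0..N. f a) + f (Suc N)" by simp
  also have "\<dots> \<le> (f 0 + g N - g 0) + (g (Suc N) - g N)"
    using Suc by (intro add_mono) auto
  finally show ?case by (simp add: algebra_simps)
qed simp

lemma sum_ge_telescope:
  fixes f g :: "nat \<Rightarrow> 'a :: ordered_ab_group_add"
  assumes "\<And>a. a < N \<Longrightarrow> g (Suc a) - g a \<le> f (Suc a)"
  shows "f 0 + g N - g 0 \<le> (\<Sum>a=0..N. f a)"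
  using sum_le_telescope[where f = "\<lambda>a. - f a" and g = "\<lambda>a. - g a"] assms
  by (simp add: sum_negf algebra_simps)

lemma sum_inverse_up_le_ln:
  fixes r :: real
  assumes "0 < r"
  shows "(\<Sum>a=0..N. 1 / (r + real a)) \<le> 1 / r + ln (r + real N) - ln r"
proof -
  have "1 / (r + real (Suc a)) \<le> ln (r + real (Suc a)) - ln (r + real a)" for a
    using inverse_add_one_le_ln_diff[of "r + real a"] assms by (simp add: algebra_simps)
  then show ?thesis
    using sum_le_telescope[of N "\<lambda>a. 1 / (r + real a)" "\<lambda>a. ln (r + real a)"] by simp
qed

lemma sum_inverse_up_ge_ln:
  fixes r :: real
  assumes "0 < r"
  shows "1 / r + ln (r + real N + 1) - ln (r + 1) \<le> (\<Sum>a=0..N. 1 / (r + real a))"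
proof -
  have "ln (r + real (Suc a) + 1) - ln (r + real a + 1) \<le> 1 / (r + real (Suc a))" for a
    using ln_diff_le_inverse[of "r + real a + 1"] assms by (simp add: algebra_simps)
  then show ?thesis
    using sum_ge_telescope[where f = "\<lambda>a. 1 / (r + real a)" and g = "\<lambda>a. ln (r + real a + 1)"] by simp
qed

lemma sum_inverse_down_ge_ln:
  fixes r :: real
  assumes "real M < r"
  shows "1 / r + ln r - ln (r - real M) \<le> (\<Sum>b=0..M. 1 / (r - real b))"
proof -
  have "- ln (r - real (Suc b)) + ln (r - real b) \<le> 1 / (r - real (Suc b))" if "b < M" for b
    using ln_diff_le_inverse[of "r - real b - 1"] assms that by (simp add: algebra_simps)
  then show ?thesis
    using sum_ge_telescope[where N = M and f = "\<lambda>b. 1 / (r - real b)" and g = "\<lambda>b. - ln (r - real b)"]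
    by (simp add: algebra_simps)
qed

lemma sum_inverse_down_le_ln:
  fixes r :: real
  assumes "real M + 1 < r"
  shows "(\<Sum>b=0..M. 1 / (r - real b)) \<le> 1 / r + ln (r - 1) - ln (r - 1 - real M)"
proof -
  have "1 / (r - real (Suc b)) \<le> - ln (r - 1 - real (Suc b)) + ln (r - 1 - real b)" if "b < M" for b
    using inverse_add_one_le_ln_diff[of "r - real b - 2"] assms that by (simp add: algebra_simps)
  then show ?thesis
    using sum_le_telescope[of M "\<lambda>b. 1 / (r - real b)" "\<lambda>b. - ln (r - 1 - real b)"] by simp
qed

lemma sum_inverse_up_le_down:
  fixes r :: real
  assumes "0 < r" "real M < r" and "(r + real m) * (r - real M) \<le> r\<^sup>2"
  shows "(\<Sum>a=0..m. 1 / (r + real a)) \<le> (\<Sum>b=0..M. 1 / (r - real b))"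
proof -
  have "ln ((r + real m) * (r - real M)) \<le> ln (r * r)"
    using assms by (simp add: power2_eq_square)
  then have "ln (r + real m) + ln (r - real M) \<le> ln r + ln r"
    using assms by (simp add: ln_mult)
  then show ?thesis
    using sum_inverse_up_le_ln[OF assms(1), of m] sum_inverse_down_ge_ln[OF assms(2)] by linarith
qed

lemma sum_inverse_down_le_up:
  fixes r :: real
  assumes "real M + 1 < r" and "(r - 1) * (r + 1) \<le> (r + real m + 1) * (r - 1 - real M)"
  shows "(\<Sum>b=0..M. 1 / (r - real b)) \<le> (\<Sum>a=0..m. 1 / (r + real a))"
proof -
  have "ln ((r - 1) * (r + 1)) \<le> ln ((r + real m + 1) * (r - 1 - real M))"
    using assms by simp
  then have "ln (r - 1) + ln (r + 1) \<le> ln (r + real m + 1) + ln (r - 1 - real M)"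
    using assms by (simp add: ln_mult)
  then show ?thesis
    using sum_inverse_up_ge_ln[of r m] sum_inverse_down_le_ln[OF assms(1)] assms(1) by linarith
qed

lemma psi_eq_scaled_sums:
  assumes "x \<noteq> 0" "1 \<le> m" and "r = real m / x - real m"
  shows "psi m k x = real m / x * ((\<Sum>a=0..m. 1 / (r + real a)) - (\<Sum>b=0..m-k. 1 / (r - real b)))"
proof -
  have up: "1 / (1 - real i / real m * x) = real m / x * (1 / (r + real (m - i)))" if "i \<le> m" for i
  proof -
    have "1 - real i / real m * x = x / real m * (r + real (m - i))"
      using assms that by (simp add: of_nat_diff field_simps)
    then show ?thesis by simp
  qed
  have down: "1 / (1 - x - real i / real m * x) = real m / x * (1 / (r - real i))" for i
  proof -
    have "1 - x - real i / real m * x = x / real m * (r - real i)"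
      using assms by (simp add: field_simps)
    then show ?thesis by simp
  qed
  have "(\<Sum>i=0..m. 1 / (1 - real i / real m * x)) = (\<Sum>i=0..m. real m / x * (1 / (r + real (m - i))))"
    by (intro sum.cong refl up) simp
  also have "\<dots> = real m / x * (\<Sum>i=0..m. 1 / (r + real (m - i)))"
    by (simp add: sum_distrib_left)
  also have "(\<Sum>i=0..m. 1 / (r + real (m - i))) = (\<Sum>a=0..m. 1 / (r + real a))"
    using sum.atLeastAtMost_rev[of "\<lambda>a. 1 / (r + real a)" 0 m] by simp
  moreover have "(\<Sum>i=0..m-k. 1 / (1 - x - real i / real m * x))
      = real m / x * (\<Sum>b=0..m-k. 1 / (r - real b))"
    by (simp only: down sum_distrib_left)
  ultimately show ?thesis
    unfolding psi_def by (simp add: right_diff_distrib)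
qed

lemma psi_at_zero: "k \<le> m \<Longrightarrow> psi m k 0 = real k"
  unfolding psi_def by (simp add: of_nat_diff)

lemma psi_at_k_nonpos:
  assumes "1 \<le> k" "k < m"
  shows "psi m k (real k / real m) \<le> 0"
proof -
  define r where "r = real m * (real m - real k) / real k"
  have "r = real m / (real k / real m) - real m"
    using assms by (simp add: r_def field_simps)
  then have psi: "psi m k (real k / real m) = real m ^ 2 / real k *
      ((\<Sum>a=0..m. 1 / (r + real a)) - (\<Sum>b=0..m-k. 1 / (r - real b)))"
    using assms psi_eq_scaled_sums by (simp add: power2_eq_square)
  have mk: "real (m - k) = real m - real k" using assms by simp
  have "r - (real m - real k) = (real m - real k)\<^sup>2 / real k"
    using assms by (simp add: r_def field_simps power2_eq_square)
  moreover have "0 < (real m - real k)\<^sup>2 / real k" using assms by simp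
  ultimately have "real (m - k) < r" unfolding mk by linarith
  moreover have "(r + real m) * (r - real (m - k)) = r\<^sup>2"
    unfolding mk using assms by (simp add: r_def field_simps power2_eq_square)
  ultimately have "(\<Sum>a=0..m. 1 / (r + real a)) \<le> (\<Sum>b=0..m-k. 1 / (r - real b))"
    using assms by (intro sum_inverse_up_le_down) (auto simp: r_def)
  then show ?thesis
    unfolding psi by (intro mult_nonneg_nonpos) auto
qed

lemma psi_at_pred_k_nonneg:
  assumes "1 \<le> k" "k \<le> m"
  shows "0 \<le> psi m k ((real k - 1) / real m)"
proof (cases "k = 1")
  case True
  then show ?thesis using psi_at_zero assms by simp
next
  case False
  define c where "c = real k - 1"
  have c: "1 \<le> c" "c < real m" using assms False by (auto simp: c_def)
  define r where "r = real m * (real m - c) / c"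
  have "r = real m / (c / real m) - real m"
    using c by (simp add: r_def field_simps)
  then have psi: "psi m k (c / real m) = real m ^ 2 / c *
      ((\<Sum>a=0..m. 1 / (r + real a)) - (\<Sum>b=0..m-k. 1 / (r - real b)))"
    using assms c psi_eq_scaled_sums by (simp add: power2_eq_square)
  have M: "real (m - k) + 1 = real m - c" using assms by (simp add: c_def of_nat_diff)
  have "r - (real m - c) = (real m - c)\<^sup>2 / c"
    using c by (simp add: r_def field_simps power2_eq_square)
  then have gap: "0 < r - (real m - c)" using c by simp
  have "(r + real m + 1) * (r - (real m - c)) = r\<^sup>2 + (r - (real m - c))"
    using c by (simp add: r_def field_simps power2_eq_square)
  moreover have "r - 1 - real (m - k) = r - (real m - c)" using M by linarith
  ultimately have "(r - 1) * (r + 1) \<le> (r + real m + 1) * (r - 1 - real (m - k))"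
    using gap by (simp add: algebra_simps power2_eq_square)
  then have "(\<Sum>b=0..m-k. 1 / (r - real b)) \<le> (\<Sum>a=0..m. 1 / (r + real a))"
    using M gap by (intro sum_inverse_down_le_up) auto
  then show ?thesis
    unfolding c_def[symmetric] psi using c by simp
qed

lemma psi_right_end_le_one: "k \<le> m \<Longrightarrow> psi_right_end m k \<le> 1"
  unfolding psi_right_end_def by (simp add: divide_simps)

lemma k_div_less_psi_right_end:
  assumes "k < m"
  shows "real k / real m < psi_right_end m k"
proof -
  have "real k * (2 * real m - real k) = real m * real m - (real m - real k)\<^sup>2"
    by (simp add: power2_eq_square algebra_simps)
  also have "\<dots> < real m * real m" using assms by simp
  finally show ?thesis
    using assms unfolding psi_right_end_def by (simp add: divide_simps)
qed

lemma psi_denom_up_pos: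
  assumes "i \<le> m" "0 \<le> y" "y < 1"
  shows "0 < 1 - real i / real m * y"
proof -
  have "real i / real m \<le> 1" using assms by (simp add: divide_simps)
  then have "real i / real m * y \<le> y"
    using assms by (intro mult_left_le_one_le) auto
  then show ?thesis using assms by linarith
qed

lemma psi_denom_down_pos:
  assumes "k \<le> m" "i \<le> m - k" "0 \<le> y" "y < psi_right_end m k"
  shows "0 < 1 - y - real i / real m * y"
proof -
  have m: "0 < real m"
    using assms unfolding psi_right_end_def by (cases "m = 0") auto
  then have "0 < 2 * real m - real k" using assms by simp
  then have "y * (2 * real m - real k) < real m"
    using assms unfolding psi_right_end_def by (simp add: divide_simps)
  moreover have "real i * y \<le> (real m - real k) * y"
    using assms by (intro mult_right_mono) auto
  ultimately have "real m * y + real i * y < real m" by (simp add: algebra_simps)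
  then show ?thesis using m by (simp add: field_simps)
qed

lemma one_minus_div_antimono:
  fixes b x z :: real
  assumes "b \<le> 1" "x \<le> z" "0 < 1 - b * x" "0 < 1 - b * z"
  shows "(1 - z) / (1 - b * z) \<le> (1 - x) / (1 - b * x)"
proof -
  have "(1 - x) * (1 - b * z) - (1 - z) * (1 - b * x) = (z - x) * (1 - b)" by algebra
  also have "\<dots> \<ge> 0" using assms by simp
  finally show ?thesis using assms by (simp add: divide_simps)
qed

lemma one_minus_div_mono:
  fixes b x z :: real
  assumes "1 \<le> b" "x \<le> z" "0 < 1 - b * x" "0 < 1 - b * z"
  shows "(1 - x) / (1 - b * x) \<le> (1 - z) / (1 - b * z)"
proof -
  have "(1 - z) * (1 - b * x) - (1 - x) * (1 - b * z) = (z - x) * (b - 1)" by algebra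
  also have "\<dots> \<ge> 0" using assms by simp
  finally show ?thesis using assms by (simp add: divide_simps)
qed

lemma one_minus_mult_psi_strict_antimono:
  assumes "k \<le> m" "0 \<le> x" "x < z" "z < psi_right_end m k"
  shows "(1 - z) * psi m k z < (1 - x) * psi m k x"
proof -
  have z1: "z < 1" using assms psi_right_end_le_one by fastforce
  have scaled: "(1 - y) * psi m k y = (\<Sum>i=0..m. (1 - y) / (1 - real i / real m * y))
      - (\<Sum>i=0..m-k. (1 - y) / (1 - (1 + real i / real m) * y))" for y
    unfolding psi_def by (simp add: right_diff_distrib sum_distrib_left algebra_simps)
  have "(\<Sum>i=0..m. (1 - z) / (1 - real i / real m * z))
      < (\<Sum>i=0..m. (1 - x) / (1 - real i / real m * x))"
  proof (rule sum_strict_mono_ex1)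
    show "\<forall>i\<in>{0..m}. (1 - z) / (1 - real i / real m * z) \<le> (1 - x) / (1 - real i / real m * x)"
    proof
      fix i assume "i \<in> {0..m}"
      then have "i \<le> m" by simp
      moreover have "real i / real m \<le> 1" using \<open>i \<le> m\<close> by (simp add: divide_simps)
      ultimately show "(1 - z) / (1 - real i / real m * z) \<le> (1 - x) / (1 - real i / real m * x)"
        using assms z1 psi_denom_up_pos[of i m x] psi_denom_up_pos[of i m z]
        by (intro one_minus_div_antimono) auto
    qed
    show "\<exists>i\<in>{0..m}. (1 - z) / (1 - real i / real m * z) < (1 - x) / (1 - real i / real m * x)"
      using assms by (intro bexI[of _ 0]) auto
  qed simp
  moreover have "(\<Sum>i=0..m-k. (1 - x) / (1 - (1 + real i / real m) * x))
      \<le> (\<Sum>i=0..m-k. (1 - z) / (1 - (1 + real i / real m) * z))"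
    using assms psi_denom_down_pos[of k m _ x] psi_denom_down_pos[of k m _ z]
    by (intro sum_mono one_minus_div_mono) (auto simp: algebra_simps)
  ultimately show ?thesis unfolding scaled by linarith
qed

lemma continuous_on_psi:
  assumes "k \<le> m" "S \<subseteq> {0..<psi_right_end m k}"
  shows "continuous_on S (psi m k)"
proof -
  have "1 - real i / real m * y \<noteq> 0" if "y \<in> S" "i \<le> m" for y i
  proof -
    have "0 \<le> y" "y < 1" using that assms psi_right_end_le_one[of k m] by auto
    then show ?thesis using psi_denom_up_pos[of i m y] that by (metis less_irrefl)
  qed
  moreover have "1 - y - real i / real m * y \<noteq> 0" if "y \<in> S" "i \<le> m - k" for y i
    using that assms psi_denom_down_pos[of k m i y] by force
  ultimately show ?thesis
    unfolding psi_def[abs_def] by (intro continuous_intros) auto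
qed

lemma psi_sign_around_zero:
  assumes "k \<le> m" "0 \<le> x0" "x0 < psi_right_end m k" "psi m k x0 = 0"
  shows "0 \<le> x \<Longrightarrow> x < x0 \<Longrightarrow> 0 < psi m k x"
    and "x0 < x \<Longrightarrow> x < psi_right_end m k \<Longrightarrow> psi m k x < 0"
proof -
  have one_minus_pos: "0 < 1 - y" if "y < psi_right_end m k" for y
    using that psi_right_end_le_one[OF assms(1)] by linarith
  show "0 < psi m k x" if "0 \<le> x" "x < x0"
    using one_minus_mult_psi_strict_antimono[of k m x x0] assms that one_minus_pos[of x]
    by (simp add: zero_less_mult_iff)
  show "psi m k x < 0" if "x0 < x" "x < psi_right_end m k"
    using one_minus_mult_psi_strict_antimono[of k m x0 x] assms that one_minus_pos[of x]
    by (simp add: mult_less_0_iff)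
qed

lemma psi_has_zero_between_grid_points:
  assumes "1 \<le> k" "k < m"
  obtains x0 where "(real k - 1) / real m \<le> x0" "x0 \<le> real k / real m" "psi m k x0 = 0"
proof -
  have lo: "0 \<le> (real k - 1) / real m" and le: "(real k - 1) / real m \<le> real k / real m"
    using assms by (simp_all add: divide_simps)
  have "{(real k - 1) / real m .. real k / real m} \<subseteq> {0..<psi_right_end m k}"
    using lo k_div_less_psi_right_end[OF assms(2)]
    by (simp only: atLeastAtMost_subseteq_atLeastLessThan_iff) simp
  then have "continuous_on {(real k - 1) / real m .. real k / real m} (psi m k)"
    using assms by (intro continuous_on_psi) auto
  then show ?thesis
    using IVT2'[OF psi_at_k_nonpos[OF assms] psi_at_pred_k_nonneg le] assms lo that by auto
qed

lemma psi_single_sign_change: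
  assumes "1 \<le> m" "k \<le> m"
  shows "\<exists>x0. (real k - 1) / real m \<le> x0 \<and> x0 \<le> real k / real m \<and>
           (\<forall>x. 0 \<le> x \<and> x < x0 \<longrightarrow> 0 < psi m k x) \<and>
           (\<forall>x. x0 < x \<and> x < psi_right_end m k \<longrightarrow> psi m k x < 0)"
proof -
  consider "k = m" | "k = 0" | "1 \<le> k" "k < m" using assms by linarith
  then show ?thesis
  proof cases
    case 1
    obtain m' where m': "m = Suc m'" using assms by (cases m) auto
    have "0 < psi m m x" if "0 \<le> x" "x < 1" for x
    proof -
      have "psi m m x = (\<Sum>i=0..m'. 1 / (1 - real i / real m * x))"
        unfolding psi_def using m' by simp
      also have "\<dots> > 0"
        using psi_denom_up_pos[of _ m x] that m' by (intro sum_pos) auto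
      finally show ?thesis .
    qed
    then show ?thesis
      using 1 assms by (intro exI[of _ 1]) (auto simp: psi_right_end_def divide_simps)
  next
    case 2
    then have "psi m k 0 = 0" using psi_at_zero assms by simp
    then show ?thesis
      using 2 assms psi_sign_around_zero[of k m 0] k_div_less_psi_right_end[of k m]
      by (intro exI[of _ 0]) auto
  next
    case 3
    then obtain x0 where x0: "(real k - 1) / real m \<le> x0" "x0 \<le> real k / real m" "psi m k x0 = 0"
      by (rule psi_has_zero_between_grid_points)
    have "0 \<le> (real k - 1) / real m" using 3 by simp
    then have "0 \<le> x0" using x0(1) by linarith
    moreover have "x0 < psi_right_end m k" using x0(2) k_div_less_psi_right_end[of k m] 3 by linarith
    ultimately show ?thesis
      using x0 3 psi_sign_around_zero[of k m x0] by (intro exI[of _ x0]) auto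
  qed
qed

theorem lemma2p3:
  fixes n k :: nat
  assumes "n \<ge> 2" and "k \<le> n - 1"
  shows "\<exists>x0::real.
           (real k - 1) / (real n - 1) \<le> x0 \<and> x0 \<le> real k / (real n - 1) \<and>
           (\<forall>x. 0 \<le> x \<and> x < x0 \<longrightarrow> phi n k x > 0) \<and>
           (\<forall>x. x0 < x \<and> x < (real n - 1) / (2 * real n - real k - 2) \<longrightarrow> phi n k x < 0)"
proof -
  obtain m where n: "n = Suc m" and "1 \<le> m" "k \<le> m"
    using assms by (cases n) auto
  have "real n - 1 = real m" and "(real n - 1) / (2 * real n - real k - 2) = psi_right_end m k"
    unfolding psi_right_end_def n by (simp_all add: algebra_simps)
  then show ?thesis
    using psi_single_sign_change[OF \<open>1 \<le> m\<close> \<open>k \<le> m\<close>] unfolding n phi_Suc_eq_psi by simp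
qed

end
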